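(* Consider any step of Reverse SeqPAV at which the current set of not-yet-removed alternatives is $S$, and let $N'\subseteq N$ with $z=\sum_{i\in N'}|A_i\cap S|>0$. Suppose that at this step Reverse SeqPAV removes alternative $a\in S$ and that $z'=\sum_{i\in N'}|A_i\cap(S\setminus\{a\})|<z$. Then for every $b\in S$, $w_{\mathrm{PAV}}(S)-w_{\mathrm{PAV}}(S\setminus\{b\})\ge\frac{(z-z')^2}{z}$.
   Context: Let $N=[n]$ be a finite set of voters and $A$ a finite set of $m$ alternatives; a profile $P=(A_1,\dots,A_n)$ gives each voter $i$ a non-empty approval set $A_i\subseteq A$. For $S\subseteq A$, $w_{\mathrm{PAV}}(S)=\sum_{i\in N}\sum_{j=1}^{|A_i\cap S|}\frac1j$. Reverse SeqPAV builds a ranking from the bottom: it starts with $S=A$ and the empty ranking, and at each step picks $a\in S$ minimizing $w_{\mathrm{PAV}}(S)-w_{\mathrm{PAV}}(S\setminus\{a\})$ (ties broken arbitrarily), removes $a$ from $S$ and prepends it to the ranking, until $S$ is empty. *)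

theory Defs
  imports Main "HOL-Library.Multiset" Complex_Main
begin

text \<open>Voters N, approval function Ap (voter i approves Ap i), alternatives A.\<close>

definition w_pav :: "'v set \<Rightarrow> ('v \<Rightarrow> 'a set) \<Rightarrow> 'a set \<Rightarrow> real" where
  "w_pav N Ap S = (\<Sum>i\<in>N. \<Sum>j=1..card (Ap i \<inter> S). 1 / real j)"

definition marg :: "'v set \<Rightarrow> ('v \<Rightarrow> 'a set) \<Rightarrow> 'a set \<Rightarrow> 'a \<Rightarrow> real" where
  "marg N Ap S a = w_pav N Ap S - w_pav N Ap (S - {a})"

definition rsp_removes :: "'v set \<Rightarrow> ('v \<Rightarrow> 'a set) \<Rightarrow> 'a set \<Rightarrow> 'a \<Rightarrow> bool" where
  "rsp_removes N Ap S a \<longleftrightarrow> a \<in> S \<and> (\<forall>c\<in>S. marg N Ap S a \<le> marg N Ap S c)"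

inductive rsp_reachable :: "'v set \<Rightarrow> ('v \<Rightarrow> 'a set) \<Rightarrow> 'a set \<Rightarrow> 'a set \<Rightarrow> bool"
  for N Ap A where
  start: "rsp_reachable N Ap A A"
| step: "rsp_reachable N Ap A S \<Longrightarrow> rsp_removes N Ap S a \<Longrightarrow> rsp_reachable N Ap A (S - {a})"

end

theory Submission
  imports Defs "HOL-Analysis.Convex"
begin

text \<open>Removing \<open>a\<close> from \<open>S\<close> costs each voter approving \<open>a\<close> the last term \<open>1/|A\<^sub>i \<inter> S|\<close>
  of its harmonic sum, so the marginal contribution of \<open>a\<close> is \<open>\<Sum>\<^sub>i 1/c\<^sub>i\<close> over the
  voters \<open>i\<close> with \<open>a \<in> A\<^sub>i\<close>. Restricting to the \<open>k = z - z'\<close> such voters in \<open>N'\<close>, whose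
  counts \<open>c\<^sub>i\<close> add up to at most \<open>z\<close>, Cauchy-Schwarz gives
  \<open>k\<^sup>2 \<le> (\<Sum> 1/c\<^sub>i)(\<Sum> c\<^sub>i) \<le> z \<cdot> marg a\<close>; and \<open>a\<close> has the least marginal contribution.\<close>

lemma harmonic_sum_diff_pred:
  assumes "c > 0"
  shows "(\<Sum>j=1..c. 1 / real j) - (\<Sum>j=1..c - 1. 1 / real j) = 1 / real c"
  using assms by (cases c) auto

lemma harmonic_card_Diff_singleton:
  assumes "finite X"
  shows "(\<Sum>j=1..card X. 1 / real j) - (\<Sum>j=1..card (X - {a}). 1 / real j)
           = (if a \<in> X then 1 / real (card X) else 0)"
proof (cases "a \<in> X")
  case True
  with assms have "card X > 0" and "card (X - {a}) = card X - 1"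
    by (auto simp: card_gt_0_iff card_Diff_singleton)
  with True show ?thesis
    using harmonic_sum_diff_pred by presburger
qed simp

lemma marg_eq_sum_inverse_card:
  assumes "finite N" and "\<forall>i\<in>N. finite (Ap i \<inter> S)"
  shows "marg N Ap S a = (\<Sum>i\<in>{i\<in>N. a \<in> Ap i \<inter> S}. 1 / real (card (Ap i \<inter> S)))"
proof -
  have "marg N Ap S a = (\<Sum>i\<in>N. (\<Sum>j=1..card (Ap i \<inter> S). 1 / real j)
                                  - (\<Sum>j=1..card (Ap i \<inter> S - {a}). 1 / real j))"
    unfolding marg_def w_pav_def by (simp add: sum_subtractf Int_Diff)
  also have "\<dots> = (\<Sum>i\<in>N. if a \<in> Ap i \<inter> S then 1 / real (card (Ap i \<inter> S)) else 0)"
    using assms(2) by (intro sum.cong refl harmonic_card_Diff_singleton) auto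
  finally show ?thesis
    using assms(1) by (simp add: sum.inter_filter)
qed

lemma sum_card_Int_eq_sum_card_Int_Diff_singleton:
  assumes "finite N'" and "\<forall>i\<in>N'. finite (Ap i \<inter> S)" and "a \<in> S"
  shows "(\<Sum>i\<in>N'. card (Ap i \<inter> S))
           = (\<Sum>i\<in>N'. card (Ap i \<inter> (S - {a}))) + card {i\<in>N'. a \<in> Ap i}"
proof -
  have "card (Ap i \<inter> S) = card (Ap i \<inter> (S - {a})) + (if a \<in> Ap i then 1 else 0)"
    if "i \<in> N'" for i
  proof (cases "a \<in> Ap i")
    case True
    with assms(2,3) that have "card (Ap i \<inter> S) > 0"
      by (auto simp: card_gt_0_iff)
    moreover have "Ap i \<inter> (S - {a}) = Ap i \<inter> S - {a}"
      by blast
    ultimately show ?thesis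
      using True assms(2,3) that by (simp add: card_Diff_singleton)
  next
    case False
    then have "Ap i \<inter> (S - {a}) = Ap i \<inter> S"
      by blast
    with False show ?thesis
      by simp
  qed
  then show ?thesis
    using assms(1) by (simp add: sum.distrib sum.If_cases Int_def)
qed

lemma card_squared_le_sum_inverse_mult_sum:
  fixes f :: "'i \<Rightarrow> real"
  assumes "\<forall>i\<in>K. f i > 0"
  shows "(real (card K))\<^sup>2 \<le> (\<Sum>i\<in>K. 1 / f i) * (\<Sum>i\<in>K. f i)"
proof -
  have "sqrt (1 / f i) * sqrt (f i) = 1" if "i \<in> K" for i
    using assms that by (auto simp: real_sqrt_mult[symmetric])
  then have "(real (card K))\<^sup>2 = (\<Sum>i\<in>K. sqrt (1 / f i) * sqrt (f i))\<^sup>2"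
    by simp
  also have "\<dots> \<le> (\<Sum>i\<in>K. (sqrt (1 / f i))\<^sup>2) * (\<Sum>i\<in>K. (sqrt (f i))\<^sup>2)"
    by (rule Cauchy_Schwarz_ineq_sum)
  also have "\<dots> = (\<Sum>i\<in>K. 1 / f i) * (\<Sum>i\<in>K. f i)"
    using assms by (intro arg_cong2[where f="(*)"] sum.cong) auto
  finally show ?thesis .
qed

lemma card_squared_div_le_sum_inverse:
  fixes f :: "'i \<Rightarrow> real"
  assumes "\<forall>i\<in>K. f i > 0" and "(\<Sum>i\<in>K. f i) \<le> z" and "z > 0"
  shows "(real (card K))\<^sup>2 / z \<le> (\<Sum>i\<in>K. 1 / f i)"
proof -
  have "(\<Sum>i\<in>K. 1 / f i) * (\<Sum>i\<in>K. f i) \<le> (\<Sum>i\<in>K. 1 / f i) * z"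
    using assms(1,2) by (intro mult_left_mono sum_nonneg) auto
  with card_squared_le_sum_inverse_mult_sum[OF assms(1)] assms(3) show ?thesis
    by (simp add: divide_le_eq)
qed

theorem lemma1:
  fixes N N' :: "'v set" and Ap :: "'v \<Rightarrow> 'a set" and A S :: "'a set" and a b :: 'a
    and z z' :: nat
  assumes "finite N" and "finite A"
    and "\<forall>i\<in>N. Ap i \<noteq> {} \<and> Ap i \<subseteq> A"
    and "rsp_reachable N Ap A S"
    and "rsp_removes N Ap S a"
    and "N' \<subseteq> N"
    and "z = (\<Sum>i\<in>N'. card (Ap i \<inter> S))" and "z > 0"
    and "z' = (\<Sum>i\<in>N'. card (Ap i \<inter> (S - {a})))" and "z' < z"
    and "b \<in> S"
  shows "marg N Ap S b \<ge> (real z - real z')\<^sup>2 / real z"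
proof -
  define K where "K = {i\<in>N'. a \<in> Ap i}"
  have "a \<in> S" and a_min: "marg N Ap S a \<le> marg N Ap S b"
    using assms(5,11) unfolding rsp_removes_def by auto
  have fin: "\<forall>i\<in>N. finite (Ap i \<inter> S)"
    using assms(2,3) by (meson finite_Int finite_subset)
  have "finite N'"
    using assms(1,6) finite_subset by blast
  have "\<forall>i\<in>N'. finite (Ap i \<inter> S)"
    using fin assms(6) by blast
  then have "z = z' + card K"
    unfolding assms(7,9) K_def
    by (rule sum_card_Int_eq_sum_card_Int_Diff_singleton[OF \<open>finite N'\<close> _ \<open>a \<in> S\<close>])
  then have "real z - real z' = real (card K)"
    by simp
  moreover have "\<forall>i\<in>K. real (card (Ap i \<inter> S)) > 0"
    using fin assms(6) \<open>a \<in> S\<close> by (auto simp: K_def card_gt_0_iff)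
  moreover have "(\<Sum>i\<in>K. real (card (Ap i \<inter> S))) \<le> real z"
    unfolding assms(7) K_def of_nat_sum[symmetric] of_nat_le_iff
    using \<open>finite N'\<close> by (intro sum_mono2) auto
  ultimately have "(real z - real z')\<^sup>2 / real z \<le> (\<Sum>i\<in>K. 1 / real (card (Ap i \<inter> S)))"
    using card_squared_div_le_sum_inverse[of K "\<lambda>i. real (card (Ap i \<inter> S))" "real z"] assms(8)
    by simp
  also have "\<dots> \<le> marg N Ap S a"
    unfolding marg_eq_sum_inverse_card[OF assms(1) fin]
    using assms(1,6) \<open>a \<in> S\<close> by (intro sum_mono2) (auto simp: K_def)
  finally show ?thesis
    using a_min by linarith
qed

end
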